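(* Any solution $(\phi^{n+1},\mu^{n+1})\in\Phi_h\times M_h$ of the J$_\varepsilon$-scheme satisfies $$\int_\Omega\phi^{n+1}\,d\boldsymbol x=\int_\Omega\phi^n\,d\boldsymbol x$$ and $$\delta_tE(\phi^{n+1})+\int_\Omega M^J_\varepsilon(\phi^{n+1})|\nabla\mu^{n+1}|^2\,d\boldsymbol x\le0,$$ where $E(\phi)=\int_\Omega\big(\frac12|\nabla\phi|^2+F(\phi)\big)d\boldsymbol x$ and $M^J_\varepsilon(\phi^{n+1})|\nabla\mu^{n+1}|^2$ means $\big(M^J_\varepsilon(\phi^{n+1})\nabla\mu^{n+1}\big)\cdot\nabla\mu^{n+1}$.
   Context: $\Omega\subset\mathbb{R}^d$ ($d=1,2,3$) bounded, $\eta>0$, $\varepsilon\in(0,1/2)$. $F(\phi)=\frac1{4\eta^2}\phi^2(\phi-1)^2=F_c+F_e$ with $F_c(\phi)=\frac1{4\eta^2}(\phi^4-2\phi^3+\frac32\phi^2)$, $F_e(\phi)=-\frac1{8\eta^2}\phi^2$. $\Delta t=T/N$, $\delta_tf^{n+1}=(f^{n+1}-f^n)/\Delta t$. $\mathcal T_h$ is a structured triangulation of $\Omega$ in which every element $I$ has vertices $\boldsymbol x_0,\dots,\boldsymbol x_d$ with $\boldsymbol x_k-\boldsymbol x_0$ parallel to the $k$-th coordinate axis. $\Phi_h$ is the space of continuous piecewise $\mathbb{P}_1$ functions, $M_h$ the space of continuous piecewise $\mathbb{P}_k$ functions ($k\ge1$). $I_h$ is nodal $\mathbb{P}_1$ interpolation,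 $(f,g)_h=\int_\Omega I_h(fg)\,d\boldsymbol x$, $(\cdot,\cdot)$ the $L^2$ product. Let $J(\phi)=(1-2\phi)\arcsin(\sqrt{1-\phi})+\sqrt{(1-\phi)\phi}+2\arcsin(\sqrt{1/2})\,\phi$ on $[0,1]$ (so $J''(\phi)=1/\sqrt{\phi(1-\phi)}$), and $J_\varepsilon\in C^2(\mathbb{R})$ equal to $J$ on $[\varepsilon,1-\varepsilon]$ and to its second-order Taylor polynomial at $\varepsilon$ (resp. $1-\varepsilon$) for $\phi<\varepsilon$ (resp. $\phi>1-\varepsilon$). For $\phi\in\Phi_h$, $M^J_\varepsilon(\phi)$ is the piecewise constant diagonal matrix whose $k$-th entry on $I$ is $\Big(\frac{\phi(\boldsymbol x_k)-\phi(\boldsymbol x_0)}{J_\varepsilon'(\phi(\boldsymbol x_k))-J_\varepsilon'(\phi(\boldsymbol x_0))}\Big)^2$ if $\phi(\boldsymbol x_k)\neq\phi(\boldsymbol x_0)$ and $\big(1/J_\varepsilon''(\phi(\boldsymbol x_0))\big)^2$ otherwise. J$_\varepsilon$-scheme: given $\phi^n\in\Phi_h$, find $(\phi^{n+1},\mu^{n+1})\in\Phi_h\times M_h$ such that for all $(\bar\phi,\bar\mu)\in\Phi_h\times M_h$: $\frac1{\Delta t}(\phi^{n+1}-\phi^n,\bar\mu)_h+(M^J_\varepsilon(\phi^{n+1})\nabla\mu^{n+1},\nabla\bar\mu)=0$ and $(\nabla\phi^{n+1},\nabla\bar\phi)+(F_c'(\phi^{n+1})+F_e'(\phi^n),\bar\phi)=(\mu^{n+1},\bar\phi)_h$.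 *)

theory Defs
  imports "HOL-Analysis.Analysis"
begin

definition F :: "real \<Rightarrow> real \<Rightarrow> real" where
  "F \<eta> \<phi> = 1 / (4 * \<eta>^2) * \<phi>^2 * (\<phi> - 1)^2"

definition Fc :: "real \<Rightarrow> real \<Rightarrow> real" where
  "Fc \<eta> \<phi> = 1 / (4 * \<eta>^2) * (\<phi>^4 - 2 * \<phi>^3 + 3/2 * \<phi>^2)"

definition Fe :: "real \<Rightarrow> real \<Rightarrow> real" where
  "Fe \<eta> \<phi> = - 1 / (8 * \<eta>^2) * \<phi>^2"

definition J :: "real \<Rightarrow> real" where
  "J \<phi> = (1 - 2*\<phi>) * arcsin (sqrt (1 - \<phi>)) + sqrt ((1 - \<phi>) * \<phi>)
          + 2 * arcsin (sqrt (1/2)) * \<phi>"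

definition Jeps :: "real \<Rightarrow> real \<Rightarrow> real" where
  "Jeps \<epsilon> \<phi> =
     (if \<phi> < \<epsilon> then J \<epsilon> + deriv J \<epsilon> * (\<phi> - \<epsilon>) + deriv (deriv J) \<epsilon> / 2 * (\<phi> - \<epsilon>)^2
      else if \<phi> > 1 - \<epsilon> then J (1 - \<epsilon>) + deriv J (1 - \<epsilon>) * (\<phi> - (1 - \<epsilon>))
                 + deriv (deriv J) (1 - \<epsilon>) / 2 * (\<phi> - (1 - \<epsilon>))^2
      else J \<phi>)"

text \<open>An element is a pair (x0, h): its vertices are x0 and
  x_k = x0 + h k e_k, one for each coordinate axis k, so x_k - x0 is parallel
  to the k-th coordinate axis.\<close>
type_synonym 'd element = "(real^'d) \<times> ('d \<Rightarrow> real)"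

definition vtx :: "'d::finite element \<Rightarrow> 'd \<Rightarrow> real^'d" where
  "vtx I k = fst I + snd I k *\<^sub>R axis k 1"

definition verts :: "'d::finite element \<Rightarrow> (real^'d) set" where
  "verts I = insert (fst I) (range (vtx I))"

definition elem_set :: "'d::finite element \<Rightarrow> (real^'d) set" where
  "elem_set I = convex hull (verts I)"

definition structured_triangulation :: "'d::finite element set \<Rightarrow> (real^'d) set \<Rightarrow> bool" where
  "structured_triangulation T \<Omega> \<longleftrightarrow>
     finite T \<and> T \<noteq> {} \<and>
     (\<forall>I\<in>T. \<forall>k. snd I k \<noteq> 0) \<and>
     (\<forall>I\<in>T. \<forall>I'\<in>T. I \<noteq> I' \<longrightarrow> verts I \<noteq> verts I') \<and>
     (\<forall>I\<in>T. \<forall>I'\<in>T. elem_set I \<inter> elem_set I' = convex hull (verts I \<inter> verts I')) \<and>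
     \<Omega> = \<Union> (elem_set ` T)"

definition bary :: "'d::finite element \<Rightarrow> 'd \<Rightarrow> real^'d \<Rightarrow> real" where
  "bary I k x = (x $ k - fst I $ k) / snd I k"

definition interp_el :: "'d::finite element \<Rightarrow> (real^'d \<Rightarrow> real) \<Rightarrow> real^'d \<Rightarrow> real" where
  "interp_el I g x = (1 - (\<Sum>k\<in>UNIV. bary I k x)) * g (fst I)
                     + (\<Sum>k\<in>UNIV. bary I k x * g (vtx I k))"

text \<open>The element of the mesh used at a point x (unique up to a null set).\<close>
definition elem_at :: "'d::finite element set \<Rightarrow> real^'d \<Rightarrow> 'd element" where
  "elem_at T x = (SOME I. I \<in> T \<and> x \<in> elem_set I)"

definition Ih :: "'d::finite element set \<Rightarrow> (real^'d \<Rightarrow> real) \<Rightarrow> real^'d \<Rightarrow> real" where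
  "Ih T g x = interp_el (elem_at T x) g x"

definition lumped :: "'d::finite element set \<Rightarrow> (real^'d) set \<Rightarrow> (real^'d \<Rightarrow> real)
                       \<Rightarrow> (real^'d \<Rightarrow> real) \<Rightarrow> real" where
  "lumped T \<Omega> f g = integral \<Omega> (Ih T (\<lambda>x. f x * g x))"

definition poly_deg_le :: "nat \<Rightarrow> (real^'d::finite \<Rightarrow> real) \<Rightarrow> bool" where
  "poly_deg_le k p \<longleftrightarrow> (\<exists>c :: ('d \<Rightarrow> nat) \<Rightarrow> real. \<forall>x.
      p x = (\<Sum>\<alpha>\<in>{\<alpha>. sum \<alpha> UNIV \<le> k}. c \<alpha> * (\<Prod>i\<in>UNIV. (x $ i) ^ \<alpha> i)))"

definition FEspace :: "'d::finite element set \<Rightarrow> (real^'d) set \<Rightarrow> nat \<Rightarrow> (real^'d \<Rightarrow> real) set" where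
  "FEspace T \<Omega> k = {f. continuous_on \<Omega> f \<and>
      (\<forall>I\<in>T. \<exists>p. poly_deg_le k p \<and> (\<forall>x\<in>elem_set I. f x = p x))}"

text \<open>(Broken) gradient; defined at all points where f is differentiable,
  in particular in the interior of every element.\<close>
definition grad :: "(real^'d::finite \<Rightarrow> real) \<Rightarrow> real^'d \<Rightarrow> real^'d" where
  "grad f x = (SOME g. (f has_derivative (\<lambda>h. g \<bullet> h)) (at x))"

definition MJ_entry :: "real \<Rightarrow> (real^'d::finite \<Rightarrow> real) \<Rightarrow> 'd element \<Rightarrow> 'd \<Rightarrow> real" where
  "MJ_entry \<epsilon> \<phi> I k =
     (let a = \<phi> (fst I); b = \<phi> (vtx I k) in
      if b \<noteq> a then ((b - a) / (deriv (Jeps \<epsilon>) b - deriv (Jeps \<epsilon>) a))^2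
      else (1 / deriv (deriv (Jeps \<epsilon>)) a)^2)"

definition mob_form :: "real \<Rightarrow> 'd::finite element set \<Rightarrow> (real^'d) set \<Rightarrow> (real^'d \<Rightarrow> real)
                        \<Rightarrow> (real^'d \<Rightarrow> real) \<Rightarrow> (real^'d \<Rightarrow> real) \<Rightarrow> real" where
  "mob_form \<epsilon> T \<Omega> \<phi> \<mu> \<nu> = integral \<Omega> (\<lambda>x.
      \<Sum>k\<in>UNIV. MJ_entry \<epsilon> \<phi> (elem_at T x) k * (grad \<mu> x $ k) * (grad \<nu> x $ k))"

definition energy :: "real \<Rightarrow> (real^'d::finite) set \<Rightarrow> (real^'d \<Rightarrow> real) \<Rightarrow> real" where
  "energy \<eta> \<Omega> \<phi> = integral \<Omega> (\<lambda>x. 1/2 * (norm (grad \<phi> x))^2 + F \<eta> (\<phi> x))"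

definition Jeps_scheme_step ::
  "real \<Rightarrow> real \<Rightarrow> real \<Rightarrow> nat \<Rightarrow> 'd::finite element set \<Rightarrow> (real^'d) set
   \<Rightarrow> (real^'d \<Rightarrow> real) \<Rightarrow> (real^'d \<Rightarrow> real) \<Rightarrow> (real^'d \<Rightarrow> real) \<Rightarrow> bool" where
  "Jeps_scheme_step \<eta> \<epsilon> dt k T \<Omega> \<phi>n \<phi>1 \<mu>1 \<longleftrightarrow>
     \<phi>1 \<in> FEspace T \<Omega> 1 \<and> \<mu>1 \<in> FEspace T \<Omega> k \<and>
     (\<forall>\<mu>b \<in> FEspace T \<Omega> k.
        1 / dt * lumped T \<Omega> (\<lambda>x. \<phi>1 x - \<phi>n x) \<mu>b + mob_form \<epsilon> T \<Omega> \<phi>1 \<mu>1 \<mu>b = 0) \<and>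
     (\<forall>\<phi>b \<in> FEspace T \<Omega> 1.
        integral \<Omega> (\<lambda>x. grad \<phi>1 x \<bullet> grad \<phi>b x)
        + integral \<Omega> (\<lambda>x. (deriv (Fc \<eta>) (\<phi>1 x) + deriv (Fe \<eta>) (\<phi>n x)) * \<phi>b x)
        = lumped T \<Omega> \<mu>1 \<phi>b)"

end

theory Submission
  imports Defs
begin

(* Both claims come from testing the scheme. With mu_b = 1 the mobility term vanishes and,
   since the lumped product reproduces the integral of P1 functions, the mass is conserved.
   With mu_b = mu1 and phi_b = phi1 - phin, the energy step E(phi1) - E(phin) is bounded by
   the lumped product (mu1, phi1 - phin)_h, thanks to the convexity inequality
   |a|^2/2 - |b|^2/2 <= a.(a - b) for the gradient part and the convex-concave splitting
   F(a) - F(b) <= (Fc'(a) + Fe'(b)) (a - b) for the potential; the first equation of the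
   scheme turns that lumped product into -dt times the mobility form. *)

lemma integrable_on_compact_continuous:
  fixes f :: "'a::euclidean_space \<Rightarrow> 'b::euclidean_space"
  assumes "compact S" "continuous_on S f"
  shows "f integrable_on S"
proof -
  have "integrable lborel (\<lambda>x. indicator S x *\<^sub>R f x)"
    by (rule borel_integrable_compact[OF assms])
  then have "(\<lambda>x. if x \<in> S then f x else 0) integrable_on UNIV"
    by (auto dest: integrable_on_lborel simp: indicator_scaleR_eq_if)
  then show ?thesis
    by (simp add: integrable_restrict_UNIV)
qed

lemma integral_le_off_negligible:
  fixes f g :: "'a::euclidean_space \<Rightarrow> real"
  assumes "f integrable_on S" "g integrable_on S" "negligible N"
    and "\<And>x. x \<in> S - N \<Longrightarrow> f x \<le> g x"
  shows "integral S f \<le> integral S g"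
proof -
  have "f integrable_on S - N" "g integrable_on S - N"
    by (auto intro!: integrable_spike_set[OF assms(1)] integrable_spike_set[OF assms(2)]
        negligible_subset[OF assms(3)])
  then have "integral (S - N) f \<le> integral (S - N) g"
    using assms(4) by (rule integral_le)
  moreover have "integral S f = integral (S - N) f" "integral S g = integral (S - N) g"
    by (auto intro!: integral_spike_set negligible_subset[OF assms(3)])
  ultimately show ?thesis
    by simp
qed

lemma grad_eqI:
  assumes "(f has_derivative (\<lambda>h. g \<bullet> h)) (at x)"
  shows "grad f x = g"
proof -
  have "(f has_derivative (\<lambda>h. grad f x \<bullet> h)) (at x)"
    unfolding grad_def by (rule someI[of _ g]) (rule assms)
  then have "(\<lambda>h. grad f x \<bullet> h) = (\<lambda>h. g \<bullet> h)"
    using assms by (rule has_derivative_unique)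
  then show ?thesis
    by (metis euclidean_eqI)
qed

lemma grad_const: "grad (\<lambda>x. c) x = 0"
  by (rule grad_eqI) simp

lemma half_norm_square_diff_le:
  fixes v w :: "'a::real_inner"
  shows "1/2 * (norm v)\<^sup>2 - 1/2 * (norm w)\<^sup>2 \<le> v \<bullet> (v - w)"
proof -
  have "0 \<le> (v - w) \<bullet> (v - w)"
    by simp
  then show ?thesis
    by (simp add: power2_norm_eq_inner inner_diff_left inner_diff_right inner_commute)
qed

lemma finite_multiindices_degree_le: "finite {\<alpha>::'d::finite \<Rightarrow> nat. sum \<alpha> UNIV \<le> k}"
proof (rule finite_subset)
  show "{\<alpha>::'d \<Rightarrow> nat. sum \<alpha> UNIV \<le> k} \<subseteq> PiE UNIV (\<lambda>_. {..k})"
  proof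
    fix \<alpha> :: "'d \<Rightarrow> nat"
    assume "\<alpha> \<in> {\<alpha>. sum \<alpha> UNIV \<le> k}"
    then have "\<alpha> i \<le> k" for i
      using member_le_sum[of i UNIV \<alpha>] by simp
    then show "\<alpha> \<in> PiE UNIV (\<lambda>_. {..k})"
      by (simp add: PiE_UNIV_domain)
  qed
qed (rule finite_PiE; simp)

lemma poly_deg_le_const: "poly_deg_le k (\<lambda>x::real^'d::finite. c)"
  unfolding poly_deg_le_def
proof (intro exI allI)
  fix x :: "real^'d"
  let ?A = "{\<alpha>::'d \<Rightarrow> nat. sum \<alpha> UNIV \<le> k}"
  have "(\<Sum>\<alpha>\<in>?A. (if \<alpha> = (\<lambda>_. 0) then c else 0) * (\<Prod>i\<in>UNIV. (x $ i) ^ \<alpha> i))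
      = (\<Sum>\<alpha>\<in>?A. if \<alpha> = (\<lambda>_. 0) then c else 0)"
    by (rule sum.cong) simp_all
  also have "\<dots> = c"
    by (subst sum.delta[OF finite_multiindices_degree_le]) simp
  finally show "c = (\<Sum>\<alpha>\<in>?A. (if \<alpha> = (\<lambda>_. 0) then c else 0) * (\<Prod>i\<in>UNIV. (x $ i) ^ \<alpha> i))"
    by simp
qed

lemma poly_deg_le_diff:
  assumes "poly_deg_le k p" "poly_deg_le k q"
  shows "poly_deg_le k (\<lambda>x. p x - q x)"
proof -
  obtain c where "\<And>x. p x = (\<Sum>\<alpha>\<in>{\<alpha>. sum \<alpha> UNIV \<le> k}. c \<alpha> * (\<Prod>i\<in>UNIV. (x $ i) ^ \<alpha> i))"
    using assms(1) unfolding poly_deg_le_def by blast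
  moreover obtain d where "\<And>x. q x = (\<Sum>\<alpha>\<in>{\<alpha>. sum \<alpha> UNIV \<le> k}. d \<alpha> * (\<Prod>i\<in>UNIV. (x $ i) ^ \<alpha> i))"
    using assms(2) unfolding poly_deg_le_def by blast
  ultimately show ?thesis
    unfolding poly_deg_le_def
    by (intro exI[of _ "\<lambda>\<alpha>. c \<alpha> - d \<alpha>"]) (simp add: sum_subtractf[symmetric] left_diff_distrib)
qed

lemma monomial_degree_le_1_eq:
  fixes \<alpha> :: "'d::finite \<Rightarrow> nat" and x :: "real^'d"
  assumes "sum \<alpha> UNIV \<le> 1"
  shows "(\<Prod>i\<in>UNIV. (x $ i) ^ \<alpha> i) = (if \<alpha> = (\<lambda>_. 0) then 1 else 0) + (\<chi> i. real (\<alpha> i)) \<bullet> x"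
proof (cases "\<alpha> = (\<lambda>_. 0)")
  case True
  then show ?thesis
    by (simp add: inner_vec_def)
next
  case False
  then obtain j where j: "\<alpha> j \<noteq> 0"
    by auto
  have "\<alpha> j + sum \<alpha> (UNIV - {j}) \<le> 1"
    using assms by (simp add: sum.remove)
  then have "\<alpha> j = 1" and "sum \<alpha> (UNIV - {j}) = 0"
    using j by linarith+
  then have "\<alpha> j = 1" and "\<And>i. i \<in> UNIV - {j} \<Longrightarrow> \<alpha> i = 0"
    by (auto simp: sum_eq_0_iff)
  then show ?thesis
    using False by (simp add: inner_vec_def prod.remove[of UNIV j] sum.remove[of UNIV j])
qed

lemma poly_deg_le_1_affine:
  assumes "poly_deg_le 1 (p :: real^'d::finite \<Rightarrow> real)"
  obtains a v where "\<And>x. p x = a + v \<bullet> x"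
proof -
  let ?A = "{\<alpha>::'d \<Rightarrow> nat. sum \<alpha> UNIV \<le> 1}"
  obtain c where c: "\<And>x. p x = (\<Sum>\<alpha>\<in>?A. c \<alpha> * (\<Prod>i\<in>UNIV. (x $ i) ^ \<alpha> i))"
    using assms unfolding poly_deg_le_def by blast
  have "p x = (\<Sum>\<alpha>\<in>?A. c \<alpha> * (if \<alpha> = (\<lambda>_. 0) then 1 else 0))
              + (\<Sum>\<alpha>\<in>?A. c \<alpha> *\<^sub>R (\<chi> i. real (\<alpha> i))) \<bullet> x" for x
    unfolding c by (simp add: monomial_degree_le_1_eq distrib_left sum.distrib inner_sum_left)
  then show ?thesis
    by (rule that)
qed

lemma FEspace_const: "(\<lambda>x. c) \<in> FEspace T \<Omega> k"
  unfolding FEspace_def by (auto intro: poly_deg_le_const)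

lemma FEspace_diff:
  assumes "f \<in> FEspace T \<Omega> k" "g \<in> FEspace T \<Omega> k"
  shows "(\<lambda>x. f x - g x) \<in> FEspace T \<Omega> k"
proof -
  have "\<exists>r. poly_deg_le k r \<and> (\<forall>x\<in>elem_set I. f x - g x = r x)" if "I \<in> T" for I
  proof -
    obtain p q where "poly_deg_le k p" "\<forall>x\<in>elem_set I. f x = p x"
      and "poly_deg_le k q" "\<forall>x\<in>elem_set I. g x = q x"
      using assms \<open>I \<in> T\<close> unfolding FEspace_def by blast
    then show ?thesis
      by (intro exI[of _ "\<lambda>x. p x - q x"]) (simp add: poly_deg_le_diff)
  qed
  then show ?thesis
    using assms unfolding FEspace_def by (auto intro: continuous_on_diff)
qed

lemma FEspace_1_affine_on_elem:
  assumes "f \<in> FEspace T \<Omega> 1" "I \<in> T"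
  obtains a v where "\<And>x. x \<in> elem_set I \<Longrightarrow> f x = a + v \<bullet> x"
proof -
  obtain p where p: "poly_deg_le 1 p" and fp: "\<forall>x\<in>elem_set I. f x = p x"
    using assms unfolding FEspace_def by blast
  obtain a v where "\<And>x. p x = a + v \<bullet> x"
    using poly_deg_le_1_affine[OF p] by blast
  with fp show ?thesis
    using that by simp
qed

lemma FEspace_1_grad_on_interior:
  assumes "f \<in> FEspace T \<Omega> 1" "I \<in> T"
  obtains v where "\<And>x. x \<in> interior (elem_set I) \<Longrightarrow> (f has_derivative (\<lambda>h. v \<bullet> h)) (at x)"
    and "\<And>x. x \<in> interior (elem_set I) \<Longrightarrow> grad f x = v"
proof -
  obtain a v where av: "\<And>x. x \<in> elem_set I \<Longrightarrow> f x = a + v \<bullet> x"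
    using FEspace_1_affine_on_elem[OF assms] by blast
  have "(f has_derivative (\<lambda>h. v \<bullet> h)) (at x)" if "x \<in> interior (elem_set I)" for x
  proof (rule has_derivative_transform_within_open[OF _ open_interior that])
    show "((\<lambda>y. a + v \<bullet> y) has_derivative (\<lambda>h. v \<bullet> h)) (at x)"
      by (auto intro!: derivative_eq_intros)
  qed (use av interior_subset in fastforce)
  with grad_eqI show ?thesis
    by (metis that)
qed

lemma compact_elem_set: "compact (elem_set I)"
  unfolding elem_set_def verts_def by (intro compact_convex_hull finite_imp_compact) simp

lemma convex_elem_set: "convex (elem_set I)"
  unfolding elem_set_def by simp

lemma vertices_in_elem_set: "fst I \<in> elem_set I" "vtx I k \<in> elem_set I"
  unfolding elem_set_def verts_def by (auto intro: hull_inc)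

lemma compact_domain:
  assumes "structured_triangulation T \<Omega>"
  shows "compact \<Omega>"
  using assms unfolding structured_triangulation_def
  by (auto intro!: compact_Union compact_elem_set)

lemma negligible_mesh_skeleton:
  assumes "structured_triangulation T \<Omega>"
  shows "negligible (\<Union>I\<in>T. frontier (elem_set I))"
  using assms unfolding structured_triangulation_def
  by (auto intro!: negligible_Union negligible_convex_frontier convex_elem_set)

lemma in_interior_elem_off_skeleton:
  assumes "structured_triangulation T \<Omega>" "x \<in> \<Omega>" "x \<notin> (\<Union>I\<in>T. frontier (elem_set I))"
  obtains I where "I \<in> T" "x \<in> interior (elem_set I)"
proof -
  obtain I where "I \<in> T" "x \<in> elem_set I"
    using assms(1,2) unfolding structured_triangulation_def by auto
  moreover from calculation assms(3) have "x \<in> interior (elem_set I)"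
    using closure_subset by (auto simp: frontier_def)
  ultimately show ?thesis
    using that by blast
qed

lemma elem_at_mem:
  assumes "structured_triangulation T \<Omega>" "x \<in> \<Omega>"
  shows "elem_at T x \<in> T" "x \<in> elem_set (elem_at T x)"
proof -
  have "\<exists>I. I \<in> T \<and> x \<in> elem_set I"
    using assms unfolding structured_triangulation_def by auto
  then show "elem_at T x \<in> T" "x \<in> elem_set (elem_at T x)"
    unfolding elem_at_def by (metis (mono_tags, lifting) someI_ex)+
qed

lemma interp_el_affine:
  assumes "\<And>k. snd I k \<noteq> 0" and "\<And>y. y \<in> elem_set I \<Longrightarrow> g y = a + v \<bullet> y"
  shows "interp_el I g x = a + v \<bullet> x"
proof -
  let ?c = "a + v \<bullet> fst I"
  have g0: "g (fst I) = ?c"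
    using assms(2) vertices_in_elem_set(1) by blast
  have gk: "g (vtx I k) = ?c + snd I k * v $ k" for k
    using assms(2)[OF vertices_in_elem_set(2)] by (simp add: vtx_def inner_add_right inner_axis)
  have scaled: "bary I k x * snd I k = x $ k - fst I $ k" for k
    using assms(1)[of k] by (simp add: bary_def)
  have "interp_el I g x = ?c + (\<Sum>k\<in>UNIV. (bary I k x * snd I k) * v $ k)"
    unfolding interp_el_def g0 gk by (simp add: algebra_simps sum.distrib sum_distrib_left sum_distrib_right)
  also have "\<dots> = ?c + v \<bullet> (x - fst I)"
    unfolding scaled by (simp add: inner_vec_def mult.commute)
  finally show ?thesis
    by (simp add: inner_diff_right)
qed

lemma Ih_FEspace_1:
  assumes "structured_triangulation T \<Omega>" "g \<in> FEspace T \<Omega> 1" "x \<in> \<Omega>"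
  shows "Ih T g x = g x"
proof -
  let ?I = "elem_at T x"
  obtain a v where av: "\<And>y. y \<in> elem_set ?I \<Longrightarrow> g y = a + v \<bullet> y"
    using FEspace_1_affine_on_elem[OF assms(2) elem_at_mem(1)[OF assms(1,3)]] by blast
  have "snd ?I k \<noteq> 0" for k
    using assms(1) elem_at_mem(1)[OF assms(1,3)] unfolding structured_triangulation_def by auto
  then have "interp_el ?I g x = a + v \<bullet> x"
    using av by (rule interp_el_affine)
  then show ?thesis
    using av elem_at_mem(2)[OF assms(1,3)] unfolding Ih_def by simp
qed

lemma piecewise_const_absolutely_integrable:
  assumes "structured_triangulation T \<Omega>"
    and "\<And>I. I \<in> T \<Longrightarrow> \<exists>c. \<forall>x\<in>interior (elem_set I). h x = c"
  shows "(h :: real^'d::finite \<Rightarrow> real) absolutely_integrable_on \<Omega>"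
proof -
  have on_elem: "h absolutely_integrable_on elem_set I" if I: "I \<in> T" for I
  proof -
    obtain c where c: "\<forall>x\<in>interior (elem_set I). h x = c"
      using assms(2)[OF I] by blast
    have "(\<lambda>x. c) absolutely_integrable_on elem_set I"
      by (intro absolutely_integrable_on_const lmeasurable_compact compact_elem_set)
    then show ?thesis
    proof (rule absolutely_integrable_spike[OF _ negligible_convex_frontier[OF convex_elem_set]])
      show "h x = c" if "x \<in> elem_set I - frontier (elem_set I)" for x
        using that c closure_subset by (auto simp: frontier_def)
    qed
  qed
  have "h absolutely_integrable_on \<Union> (elem_set ` S)" if "finite S" "S \<subseteq> T" for S
    using that by (induction S rule: finite_induct)
      (auto intro!: absolutely_integrable_Un on_elem simp: absolutely_integrable_negligible)
  then show ?thesis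
    using assms(1) unfolding structured_triangulation_def by auto
qed

lemma FEspace_1_grad_integrable:
  fixes G :: "real^'d::finite \<Rightarrow> real^'d \<Rightarrow> real"
  assumes "structured_triangulation T \<Omega>" "f \<in> FEspace T \<Omega> 1" "g \<in> FEspace T \<Omega> 1"
  shows "(\<lambda>x. G (grad f x) (grad g x)) integrable_on \<Omega>"
proof -
  have "\<exists>c. \<forall>x\<in>interior (elem_set I). G (grad f x) (grad g x) = c" if I: "I \<in> T" for I
  proof -
    obtain v w where "\<And>x. x \<in> interior (elem_set I) \<Longrightarrow> grad f x = v"
      and "\<And>x. x \<in> interior (elem_set I) \<Longrightarrow> grad g x = w"
      using FEspace_1_grad_on_interior[OF assms(2) I] FEspace_1_grad_on_interior[OF assms(3) I]
      by metis
    then show ?thesis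
      by auto
  qed
  then have "(\<lambda>x. G (grad f x) (grad g x)) absolutely_integrable_on \<Omega>"
    by (rule piecewise_const_absolutely_integrable[OF assms(1)])
  then show ?thesis
    by (rule set_lebesgue_integral_eq_integral(1))
qed

lemma FEspace_integrable:
  assumes "structured_triangulation T \<Omega>" "f \<in> FEspace T \<Omega> k"
  shows "f integrable_on \<Omega>"
  using assms unfolding FEspace_def
  by (auto intro: integrable_on_compact_continuous compact_domain)

lemma deriv_Fc: "deriv (Fc \<eta>) y = 1 / (4 * \<eta>\<^sup>2) * (4 * y^3 - 6 * y\<^sup>2 + 3 * y)"
proof (rule DERIV_imp_deriv)
  have "((\<lambda>\<phi>. c * (\<phi>^4 - 2 * \<phi>^3 + 3/2 * \<phi>\<^sup>2)) has_real_derivative c * (4 * y^3 - 6 * y\<^sup>2 + 3 * y)) (at y)"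
    for c :: real
    by (auto intro!: derivative_eq_intros simp: algebra_simps power2_eq_square power3_eq_cube)
  then show "(Fc \<eta> has_real_derivative 1 / (4 * \<eta>\<^sup>2) * (4 * y^3 - 6 * y\<^sup>2 + 3 * y)) (at y)"
    unfolding Fc_def[abs_def] .
qed

lemma deriv_Fe: "deriv (Fe \<eta>) y = 1 / (4 * \<eta>\<^sup>2) * (- y)"
proof (rule DERIV_imp_deriv)
  have "((\<lambda>\<phi>. c * \<phi>\<^sup>2) has_real_derivative c * (2 * y)) (at y)" for c :: real
    by (auto intro!: derivative_eq_intros)
  moreover have "- 1 / (8 * \<eta>\<^sup>2) * (2 * y) = 1 / (4 * \<eta>\<^sup>2) * (- y)"
    by simp
  ultimately show "(Fe \<eta> has_real_derivative 1 / (4 * \<eta>\<^sup>2) * (- y)) (at y)"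
    unfolding Fe_def[abs_def] by metis
qed

lemma F_diff_le_convex_concave_split:
  "F \<eta> a - F \<eta> b \<le> (deriv (Fc \<eta>) a + deriv (Fe \<eta>) b) * (a - b)"
proof -
  define L R where "L = a\<^sup>2 * (a - 1)\<^sup>2 - b\<^sup>2 * (b - 1)\<^sup>2"
    and "R = (4 * a^3 - 6 * a\<^sup>2 + 3 * a - b) * (a - b)"
  have "2 * (R - L) = (b - a)\<^sup>2 * (2 * (b + a - 1)\<^sup>2 + (2 * a - 1)\<^sup>2 + 1)"
    unfolding L_def R_def by (simp add: power2_eq_square power3_eq_cube algebra_simps)
  also have "\<dots> \<ge> 0"
    by simp
  finally have "1 / (4 * \<eta>\<^sup>2) * L \<le> 1 / (4 * \<eta>\<^sup>2) * R"
    by (intro mult_left_mono) simp_all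
  moreover have "F \<eta> a - F \<eta> b = 1 / (4 * \<eta>\<^sup>2) * L"
    unfolding L_def F_def by (simp add: algebra_simps)
  moreover have "(deriv (Fc \<eta>) a + deriv (Fe \<eta>) b) * (a - b) = 1 / (4 * \<eta>\<^sup>2) * R"
    unfolding R_def deriv_Fc deriv_Fe distrib_left[symmetric] by simp
  ultimately show ?thesis
    by simp
qed

lemma energy_density_diff_le:
  assumes "(\<phi>1 has_derivative (\<lambda>h. v1 \<bullet> h)) (at x)" "(\<phi>0 has_derivative (\<lambda>h. v0 \<bullet> h)) (at x)"
  shows "1/2 * (norm (grad \<phi>1 x))\<^sup>2 + F \<eta> (\<phi>1 x) - (1/2 * (norm (grad \<phi>0 x))\<^sup>2 + F \<eta> (\<phi>0 x))
    \<le> grad \<phi>1 x \<bullet> grad (\<lambda>y. \<phi>1 y - \<phi>0 y) x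
       + (deriv (Fc \<eta>) (\<phi>1 x) + deriv (Fe \<eta>) (\<phi>0 x)) * (\<phi>1 x - \<phi>0 x)"
proof -
  have "((\<lambda>y. \<phi>1 y - \<phi>0 y) has_derivative (\<lambda>h. (v1 - v0) \<bullet> h)) (at x)"
    unfolding inner_diff_left by (intro has_derivative_diff assms)
  then have "grad (\<lambda>y. \<phi>1 y - \<phi>0 y) x = v1 - v0"
    by (rule grad_eqI)
  moreover have "grad \<phi>1 x = v1" "grad \<phi>0 x = v0"
    using assms by (simp_all add: grad_eqI)
  ultimately show ?thesis
    using half_norm_square_diff_le[of v1 v0] F_diff_le_convex_concave_split[of \<eta> "\<phi>1 x" "\<phi>0 x"]
    by simp
qed

lemma FEspace_1_energy_density_integrable:
  assumes "structured_triangulation T \<Omega>" "\<phi> \<in> FEspace T \<Omega> 1"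
  shows "(\<lambda>x. 1/2 * (norm (grad \<phi> x))\<^sup>2 + F \<eta> (\<phi> x)) integrable_on \<Omega>"
proof (rule integrable_add)
  show "(\<lambda>x. 1/2 * (norm (grad \<phi> x))\<^sup>2) integrable_on \<Omega>"
    using FEspace_1_grad_integrable[OF assms(1,2,2), of "\<lambda>v w. 1/2 * (norm v)\<^sup>2"] by simp
  show "(\<lambda>x. F \<eta> (\<phi> x)) integrable_on \<Omega>"
    using assms unfolding FEspace_def F_def
    by (intro integrable_on_compact_continuous compact_domain continuous_intros) auto
qed

lemma lumped_commute: "lumped T \<Omega> f g = lumped T \<Omega> g f"
  unfolding lumped_def by (simp add: mult.commute)

lemma Jeps_scheme_mass_conservation:
  assumes "structured_triangulation T \<Omega>" "dt \<noteq> 0" "\<phi>n \<in> FEspace T \<Omega> 1"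
    and "Jeps_scheme_step \<eta> \<epsilon> dt k T \<Omega> \<phi>n \<phi>1 \<mu>1"
  shows "integral \<Omega> \<phi>1 = integral \<Omega> \<phi>n"
proof -
  have \<phi>1: "\<phi>1 \<in> FEspace T \<Omega> 1"
    using assms(4) unfolding Jeps_scheme_step_def by blast
  have "1 / dt * lumped T \<Omega> (\<lambda>x. \<phi>1 x - \<phi>n x) (\<lambda>x. 1) + mob_form \<epsilon> T \<Omega> \<phi>1 \<mu>1 (\<lambda>x. 1) = 0"
    using assms(4) FEspace_const unfolding Jeps_scheme_step_def by blast
  moreover have "mob_form \<epsilon> T \<Omega> \<phi>1 \<mu>1 (\<lambda>x. 1) = 0"
    unfolding mob_form_def grad_const by simp
  moreover have "lumped T \<Omega> (\<lambda>x. \<phi>1 x - \<phi>n x) (\<lambda>x. 1) = integral \<Omega> (\<lambda>x. \<phi>1 x - \<phi>n x)"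
    unfolding lumped_def
    using Ih_FEspace_1[OF assms(1) FEspace_diff[OF \<phi>1 assms(3)]] by (simp cong: integral_cong)
  moreover have "integral \<Omega> (\<lambda>x. \<phi>1 x - \<phi>n x) = integral \<Omega> \<phi>1 - integral \<Omega> \<phi>n"
    using FEspace_integrable[OF assms(1)] \<phi>1 assms(3) by (simp add: integral_diff)
  ultimately show ?thesis
    using assms(2) by simp
qed

lemma Jeps_scheme_energy_le_lumped:
  fixes \<phi>n :: "real^'d::finite \<Rightarrow> real"
  assumes tri: "structured_triangulation T \<Omega>" and \<phi>n: "\<phi>n \<in> FEspace T \<Omega> 1"
    and step: "Jeps_scheme_step \<eta> \<epsilon> dt k T \<Omega> \<phi>n \<phi>1 \<mu>1"
  shows "energy \<eta> \<Omega> \<phi>1 - energy \<eta> \<Omega> \<phi>n \<le> lumped T \<Omega> (\<lambda>x. \<phi>1 x - \<phi>n x) \<mu>1"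
proof -
  define \<delta> where "\<delta> = (\<lambda>x. \<phi>1 x - \<phi>n x)"
  define e :: "(real^'d \<Rightarrow> real) \<Rightarrow> real^'d \<Rightarrow> real"
    where "e = (\<lambda>\<phi> x. 1/2 * (norm (grad \<phi> x))\<^sup>2 + F \<eta> (\<phi> x))"
  define a where "a = (\<lambda>x. grad \<phi>1 x \<bullet> grad \<delta> x)"
  define b where "b = (\<lambda>x. (deriv (Fc \<eta>) (\<phi>1 x) + deriv (Fe \<eta>) (\<phi>n x)) * \<delta> x)"
  have \<phi>1: "\<phi>1 \<in> FEspace T \<Omega> 1"
    using step unfolding Jeps_scheme_step_def by blast
  have \<delta>: "\<delta> \<in> FEspace T \<Omega> 1"
    unfolding \<delta>_def by (rule FEspace_diff[OF \<phi>1 \<phi>n])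
  have e_int: "e \<phi> integrable_on \<Omega>" if "\<phi> \<in> FEspace T \<Omega> 1" for \<phi>
    unfolding e_def using FEspace_1_energy_density_integrable[OF tri that] .
  have a_int: "a integrable_on \<Omega>"
    unfolding a_def by (rule FEspace_1_grad_integrable[OF tri \<phi>1 \<delta>])
  have b_int: "b integrable_on \<Omega>"
    using \<phi>1 \<phi>n unfolding b_def \<delta>_def deriv_Fc deriv_Fe FEspace_def
    by (intro integrable_on_compact_continuous compact_domain[OF tri] continuous_intros) auto
  \<comment> \<open>On element boundaries \<open>grad\<close> is an arbitrary choice, so the pointwise bound holds only off the skeleton.\<close>
  have "e \<phi>1 x - e \<phi>n x \<le> a x + b x" if x: "x \<in> \<Omega> - (\<Union>I\<in>T. frontier (elem_set I))" for x
  proof -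
    obtain I where "I \<in> T" "x \<in> interior (elem_set I)"
      using in_interior_elem_off_skeleton[OF tri] x by blast
    then obtain v1 v0 where "(\<phi>1 has_derivative (\<lambda>h. v1 \<bullet> h)) (at x)" "(\<phi>n has_derivative (\<lambda>h. v0 \<bullet> h)) (at x)"
      using FEspace_1_grad_on_interior[OF \<phi>1] FEspace_1_grad_on_interior[OF \<phi>n] by metis
    then show ?thesis
      unfolding e_def a_def b_def \<delta>_def by (rule energy_density_diff_le)
  qed
  then have "integral \<Omega> (\<lambda>x. e \<phi>1 x - e \<phi>n x) \<le> integral \<Omega> (\<lambda>x. a x + b x)"
    using negligible_mesh_skeleton[OF tri] e_int[OF \<phi>1] e_int[OF \<phi>n] a_int b_int
    by (intro integral_le_off_negligible integrable_diff integrable_add) auto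
  moreover have "integral \<Omega> a + integral \<Omega> b = lumped T \<Omega> \<mu>1 \<delta>"
    using step \<delta> unfolding Jeps_scheme_step_def a_def b_def by blast
  moreover have "energy \<eta> \<Omega> \<phi> = integral \<Omega> (e \<phi>)" for \<phi>
    unfolding energy_def e_def ..
  ultimately show ?thesis
    unfolding \<delta>_def[symmetric]
    using e_int[OF \<phi>1] e_int[OF \<phi>n] a_int b_int by (simp add: integral_diff integral_add lumped_commute)
qed

theorem lemma6:
  fixes T :: "'d::finite element set" and \<Omega> :: "(real^'d) set"
    and \<eta> \<epsilon> dt :: real and k :: nat
    and \<phi>n \<phi>1 \<mu>1 :: "real^'d \<Rightarrow> real"
  assumes "CARD('d) \<le> 3"
    and "structured_triangulation T \<Omega>"
    and "\<eta> > 0" and "0 < \<epsilon>" and "\<epsilon> < 1/2"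
    and "dt > 0" and "k \<ge> 1"
    and "\<phi>n \<in> FEspace T \<Omega> 1"
    and "Jeps_scheme_step \<eta> \<epsilon> dt k T \<Omega> \<phi>n \<phi>1 \<mu>1"
  shows "integral \<Omega> \<phi>1 = integral \<Omega> \<phi>n \<and>
         (energy \<eta> \<Omega> \<phi>1 - energy \<eta> \<Omega> \<phi>n) / dt + mob_form \<epsilon> T \<Omega> \<phi>1 \<mu>1 \<mu>1 \<le> 0"
proof
  show "integral \<Omega> \<phi>1 = integral \<Omega> \<phi>n"
    using assms(6) by (intro Jeps_scheme_mass_conservation[OF assms(2) _ assms(8,9)]) simp
next
  let ?L = "lumped T \<Omega> (\<lambda>x. \<phi>1 x - \<phi>n x) \<mu>1"
  have "?L / dt + mob_form \<epsilon> T \<Omega> \<phi>1 \<mu>1 \<mu>1 = 0"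
    using assms(9) unfolding Jeps_scheme_step_def by auto
  moreover have "(energy \<eta> \<Omega> \<phi>1 - energy \<eta> \<Omega> \<phi>n) / dt \<le> ?L / dt"
    using Jeps_scheme_energy_le_lumped[OF assms(2,8,9)] assms(6) by (simp add: divide_right_mono)
  ultimately show "(energy \<eta> \<Omega> \<phi>1 - energy \<eta> \<Omega> \<phi>n) / dt + mob_form \<epsilon> T \<Omega> \<phi>1 \<mu>1 \<mu>1 \<le> 0"
    by linarith
qed

end
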